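(* Let $C$ be a linear code over $\mathbb{Z}_4$ of type $4^{k_1}2^{k_2}$ and length $n$ which is projective, Plotkin-optimal, and has exactly two distinct nonzero Lee weights. Then there is an integer $t$ with $1\le t\le k_1$ such that $$n=d_L(C)=2^{2k_1+k_2-1}-2^{2k_1+k_2-t-1}.$$ Moreover, the nonzero Lee weights of $C$ are $w_1=2^{2k_1+k_2-1}-2^{2k_1+k_2-t-1}$ and $w_2=2^{2k_1+k_2-1}$, and $A_{w_1}=2^{2k_1+k_2}-2^t$, $A_{w_2}=2^t-1$.
   Context: A linear code of length $n$ over $\mathbb{Z}_4$ is a $\mathbb{Z}_4$-submodule of $\mathbb{Z}_4^n$; it has type $4^{k_1}2^{k_2}$ if it is isomorphic as a group to $\mathbb{Z}_4^{k_1}\times\mathbb{Z}_2^{k_2}$ (so $|C|=4^{k_1}2^{k_2}$). The Lee weight on $\mathbb{Z}_4$ is $w_L(0)=0,w_L(1)=1,w_L(2)=2,w_L(3)=1$, extended additively to vectors; $d_L(C)$ is the minimum Lee weight of a nonzero codeword. $C$ is Plotkin-optimal if $d_L(C)=\lfloor \frac{|C|}{|C|-1}n\rfloor$. The dual $C^\perp$ is taken with respect to the inner product $\mathbf{x}\cdot\mathbf{y}=\sum x_iy_i\in\mathbb{Z}_4$, and $C$ is projective if $d_L(C^\perp)\ge 3$. $A_w$ denotes the number of codewords of $C$ of Lee weight $w$. *)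

theory Defs
  imports Complex_Main "HOL-Library.Numeral_Type" "HOL-Library.Function_Algebras"
begin

text \<open>Vectors of length n over Z4 are functions nat => 4 vanishing outside {..<n}.
  The ring Z4 is the numeral type 4 of HOL-Library.Numeral_Type.\<close>

definition vecs :: "nat \<Rightarrow> (nat \<Rightarrow> 4) set" where
  "vecs n = {x. \<forall>i\<ge>n. x i = 0}"

definition linear_code :: "nat \<Rightarrow> (nat \<Rightarrow> 4) set \<Rightarrow> bool" where
  "linear_code n C \<longleftrightarrow> C \<subseteq> vecs n \<and> 0 \<in> C \<and>
     (\<forall>x\<in>C. \<forall>y\<in>C. x + y \<in> C) \<and> (\<forall>c::4. \<forall>x\<in>C. (\<lambda>i. c * x i) \<in> C)"

text \<open>Model of Z4^k1 x Z2^k2, with Z2 realised as the subgroup {0,2} of Z4.\<close>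
definition model_group :: "nat \<Rightarrow> nat \<Rightarrow> (nat \<Rightarrow> 4) set" where
  "model_group k1 k2 = {g. (\<forall>i. k1 \<le> i \<and> i < k1 + k2 \<longrightarrow> g i \<in> {0, 2}) \<and>
                          (\<forall>i\<ge>k1 + k2. g i = 0)}"

definition has_type :: "(nat \<Rightarrow> 4) set \<Rightarrow> nat \<Rightarrow> nat \<Rightarrow> bool" where
  "has_type C k1 k2 \<longleftrightarrow> (\<exists>\<phi>. bij_betw \<phi> (model_group k1 k2) C \<and>
      (\<forall>x\<in>model_group k1 k2. \<forall>y\<in>model_group k1 k2. \<phi> (x + y) = \<phi> x + \<phi> y))"

definition lee :: "4 \<Rightarrow> nat" where
  "lee a = (if a = 0 then 0 else if a = 2 then 2 else 1)"

definition lee_wt :: "nat \<Rightarrow> (nat \<Rightarrow> 4) \<Rightarrow> nat" where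
  "lee_wt n x = (\<Sum>i<n. lee (x i))"

definition lee_dist :: "nat \<Rightarrow> (nat \<Rightarrow> 4) set \<Rightarrow> nat" where
  "lee_dist n C = Min {lee_wt n x | x. x \<in> C \<and> x \<noteq> 0}"

definition plotkin_optimal :: "nat \<Rightarrow> (nat \<Rightarrow> 4) set \<Rightarrow> bool" where
  "plotkin_optimal n C \<longleftrightarrow>
     int (lee_dist n C) = \<lfloor>real (card C) / (real (card C) - 1) * real n\<rfloor>"

definition dual_code :: "nat \<Rightarrow> (nat \<Rightarrow> 4) set \<Rightarrow> (nat \<Rightarrow> 4) set" where
  "dual_code n C = {y \<in> vecs n. \<forall>x\<in>C. (\<Sum>i<n. x i * y i) = 0}"

text \<open>d_L(C^perp) >= 3, with the convention that the trivial code has minimum distance infinity.\<close>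
definition projective :: "nat \<Rightarrow> (nat \<Rightarrow> 4) set \<Rightarrow> bool" where
  "projective n C \<longleftrightarrow> (\<forall>y\<in>dual_code n C. y \<noteq> 0 \<longrightarrow> 3 \<le> lee_wt n y)"

definition nonzero_weights :: "nat \<Rightarrow> (nat \<Rightarrow> 4) set \<Rightarrow> nat set" where
  "nonzero_weights n C = {lee_wt n x | x. x \<in> C \<and> x \<noteq> 0}"

definition weight_count :: "nat \<Rightarrow> (nat \<Rightarrow> 4) set \<Rightarrow> nat \<Rightarrow> nat" where
  "weight_count n C w = card {x \<in> C. lee_wt n x = w}"

end

theory Submission
  imports Defs "HOL-Probability.Product_PMF" "HOL-Computational_Algebra.Primes"
begin

(* Let omega a = i^a be the basic additive character of Z4. A Z4-valued additive map that is
   not identically zero on C sums omega to zero over C. Since lee a = 1 - Re (omega a), and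
   projectivity makes the maps x \<mapsto> x_i, 2 x_i, x_i + x_j, x_i - x_j nonzero on C, the first
   two moments of the Lee weight over C are forced: their sums are n |C| and (n^2 + n/2) |C|.
   Orthogonality also bounds the number of additive maps C \<rightarrow> Z4 that are pairwise distinct
   on C by |C|; the 2n maps \<plusminus>x_i have order 4 and the 2^(k1+k2) maps of C \<cong> Z4^k1 \<times> Z2^k2
   into {0,2} have order 2, so |C| \<ge> 2n + 2^(k1+k2). Hence the Plotkin bound gives d_L(C) = n,
   and the two moment equations of a two-weight code force w2 = |C|/2 and
   (A_w2 + 1)(w2 - n) = w2, so A_w2 + 1 = 2^t; the bound on |C| then yields t \<le> k1. *)

section \<open>Characters of Z4\<close>

lemma Z4_cases:
  fixes a :: 4
  obtains "a = 0" | "a = 1" | "a = 2" | "a = 3"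
proof (cases a rule: bit0_cases)
  case (of_int z)
  then have "z = 0 \<or> z = 1 \<or> z = 2 \<or> z = 3" by auto
  then show ?thesis using of_int that by auto
qed

definition omega :: "4 \<Rightarrow> complex" where
  "omega a = (if a = 0 then 1 else if a = 1 then \<i> else if a = 2 then -1 else -\<i>)"

lemma omega_0 [simp]: "omega 0 = 1"
  by (simp add: omega_def)

lemma omega_add: "omega (a + b) = omega a * omega b"
  by (cases a rule: Z4_cases; cases b rule: Z4_cases) (simp_all add: omega_def)

lemma omega_diff: "omega (a - b) = omega a * cnj (omega b)"
  by (cases a rule: Z4_cases; cases b rule: Z4_cases) (simp_all add: omega_def)

lemma omega_eq_1_iff: "omega a = 1 \<longleftrightarrow> a = 0"
  by (cases a rule: Z4_cases) (simp_all add: omega_def complex_eq_iff)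

lemma lee_0 [simp]: "lee 0 = 0"
  by (simp add: lee_def)

lemma lee_eq_0_iff [simp]: "lee a = 0 \<longleftrightarrow> a = 0"
  by (simp add: lee_def)

lemma lee_le_2: "lee a \<le> 2"
  by (simp add: lee_def)

lemma lee_eq_1_minus_Re_omega: "real (lee a) = 1 - Re (omega a)"
  by (cases a rule: Z4_cases) (simp_all add: omega_def lee_def)

lemma lee_square: "real (lee a) ^ 2 = 3 / 2 - 2 * Re (omega a) + Re (omega (a * 2)) / 2"
  by (cases a rule: Z4_cases) (simp_all add: omega_def lee_def)

lemma lee_mult:
  "real (lee a) * real (lee b) =
     1 - Re (omega a) - Re (omega b) + Re (omega (a + b)) / 2 + Re (omega (a - b)) / 2"
  by (cases a rule: Z4_cases; cases b rule: Z4_cases) (simp_all add: omega_def lee_def)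

lemma sum_omega_eq_0:
  fixes C :: "'a::ab_group_add set" and \<theta> :: "'a \<Rightarrow> 4"
  assumes "finite C"
    and add_closed: "\<And>x y. x \<in> C \<Longrightarrow> y \<in> C \<Longrightarrow> x + y \<in> C"
    and diff_closed: "\<And>x y. x \<in> C \<Longrightarrow> y \<in> C \<Longrightarrow> x - y \<in> C"
    and additive: "\<And>x y. x \<in> C \<Longrightarrow> y \<in> C \<Longrightarrow> \<theta> (x + y) = \<theta> x + \<theta> y"
    and "c \<in> C" "\<theta> c \<noteq> 0"
  shows "(\<Sum>x\<in>C. omega (\<theta> x)) = 0"
proof -
  have "bij_betw (\<lambda>x. x + c) C C"
    by (rule bij_betw_byWitness[where f' = "\<lambda>x. x - c"])
       (use \<open>c \<in> C\<close> add_closed diff_closed in auto)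
  then have "(\<Sum>x\<in>C. omega (\<theta> x)) = (\<Sum>x\<in>C. omega (\<theta> (x + c)))"
    using sum.reindex_bij_betw[of "\<lambda>x. x + c" C C "\<lambda>x. omega (\<theta> x)"] by simp
  also have "\<dots> = (\<Sum>x\<in>C. omega (\<theta> x)) * omega (\<theta> c)"
    using additive \<open>c \<in> C\<close> by (simp add: omega_add sum_distrib_right)
  finally have "(\<Sum>x\<in>C. omega (\<theta> x)) * (1 - omega (\<theta> c)) = 0"
    by (simp add: algebra_simps)
  moreover have "omega (\<theta> c) \<noteq> 1"
    using \<open>\<theta> c \<noteq> 0\<close> by (simp add: omega_eq_1_iff)
  ultimately show ?thesis by simp
qed

(* The sum of |\<Sum>_k omega (\<theta>_k x)|^2 over C equals |I| |C| by orthogonality, and its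
   term at x = 0 alone is |I|^2. *)
lemma card_le_of_distinct_characters:
  fixes C :: "'a::ab_group_add set" and \<theta> :: "'i \<Rightarrow> 'a \<Rightarrow> 4"
  assumes "finite C" "0 \<in> C"
    and add_closed: "\<And>x y. x \<in> C \<Longrightarrow> y \<in> C \<Longrightarrow> x + y \<in> C"
    and diff_closed: "\<And>x y. x \<in> C \<Longrightarrow> y \<in> C \<Longrightarrow> x - y \<in> C"
    and "finite I"
    and additive: "\<And>k x y. k \<in> I \<Longrightarrow> x \<in> C \<Longrightarrow> y \<in> C \<Longrightarrow> \<theta> k (x + y) = \<theta> k x + \<theta> k y"
    and separated: "\<And>k l. k \<in> I \<Longrightarrow> l \<in> I \<Longrightarrow> k \<noteq> l \<Longrightarrow> \<exists>x\<in>C. \<theta> k x \<noteq> \<theta> l x"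
  shows "card I \<le> card C"
proof -
  define Z where "Z x = (\<Sum>k\<in>I. omega (\<theta> k x))" for x
  have inner: "(\<Sum>x\<in>C. omega (\<theta> k x - \<theta> l x)) = (if k = l then of_nat (card C) else 0)"
    if "k \<in> I" "l \<in> I" for k l
  proof (cases "k = l")
    case False
    then obtain c where "c \<in> C" "\<theta> k c - \<theta> l c \<noteq> 0"
      using separated \<open>k \<in> I\<close> \<open>l \<in> I\<close> by fastforce
    then show ?thesis
      using sum_omega_eq_0[of C "\<lambda>x. \<theta> k x - \<theta> l x" c] assms that False by auto
  qed simp
  have "(\<Sum>x\<in>C. Z x * cnj (Z x)) = (\<Sum>k\<in>I. \<Sum>l\<in>I. \<Sum>x\<in>C. omega (\<theta> k x - \<theta> l x))"
    by (simp add: Z_def sum_product omega_diff sum.swap[of _ C])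
  also have "\<dots> = of_nat (card I * card C)"
    using \<open>finite I\<close> by (simp add: inner)
  finally have "of_real (\<Sum>x\<in>C. cmod (Z x) ^ 2) = (of_nat (card I * card C) :: complex)"
    by (simp add: complex_norm_square del: of_real_power)
  then have "(\<Sum>x\<in>C. cmod (Z x) ^ 2) = real (card I * card C)"
    by (metis of_real_eq_iff of_real_of_nat_eq)
  moreover have "Z 0 = of_nat (card I)"
    using additive[OF _ \<open>0 \<in> C\<close> \<open>0 \<in> C\<close>] by (simp add: Z_def omega_def)
  moreover have "cmod (Z 0) ^ 2 \<le> (\<Sum>x\<in>C. cmod (Z x) ^ 2)"
    using \<open>finite C\<close> \<open>0 \<in> C\<close> by (intro member_le_sum) auto
  ultimately have "real (card I) * real (card I) \<le> real (card I) * real (card C)"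
    by (simp add: power2_eq_square)
  then show ?thesis
    by (cases "card I = 0") simp_all
qed

lemma card_le_of_distinct_characters_of_orders_4_2:
  fixes C :: "'a::ab_group_add set" and \<theta> :: "'i \<Rightarrow> 'a \<Rightarrow> 4" and \<eta> :: "'j \<Rightarrow> 'a \<Rightarrow> 4"
  assumes "finite C" "0 \<in> C"
    and "\<And>x y. x \<in> C \<Longrightarrow> y \<in> C \<Longrightarrow> x + y \<in> C"
    and "\<And>x y. x \<in> C \<Longrightarrow> y \<in> C \<Longrightarrow> x - y \<in> C"
    and "finite I" "finite J"
    and \<theta>_additive: "\<And>k x y. k \<in> I \<Longrightarrow> x \<in> C \<Longrightarrow> y \<in> C \<Longrightarrow> \<theta> k (x + y) = \<theta> k x + \<theta> k y"
    and \<eta>_additive: "\<And>k x y. k \<in> J \<Longrightarrow> x \<in> C \<Longrightarrow> y \<in> C \<Longrightarrow> \<eta> k (x + y) = \<eta> k x + \<eta> k y"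
    and \<theta>_separated: "\<And>k l. k \<in> I \<Longrightarrow> l \<in> I \<Longrightarrow> k \<noteq> l \<Longrightarrow> \<exists>x\<in>C. \<theta> k x \<noteq> \<theta> l x"
    and \<eta>_separated: "\<And>k l. k \<in> J \<Longrightarrow> l \<in> J \<Longrightarrow> k \<noteq> l \<Longrightarrow> \<exists>x\<in>C. \<eta> k x \<noteq> \<eta> l x"
    and \<theta>_order_4: "\<And>k. k \<in> I \<Longrightarrow> \<exists>x\<in>C. 2 * \<theta> k x \<noteq> 0"
    and \<eta>_order_2: "\<And>k x. k \<in> J \<Longrightarrow> x \<in> C \<Longrightarrow> 2 * \<eta> k x = 0"
  shows "card I + card J \<le> card C"
proof -
  have different_orders: "\<exists>x\<in>C. \<theta> k x \<noteq> \<eta> l x" if "k \<in> I" "l \<in> J" for k l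
    using \<theta>_order_4[OF \<open>k \<in> I\<close>] \<eta>_order_2[OF \<open>l \<in> J\<close>] by metis
  have "card (I <+> J) \<le> card C"
  proof (rule card_le_of_distinct_characters[of C _ "case_sum \<theta> \<eta>"])
    fix k l assume kl: "k \<in> I <+> J" "l \<in> I <+> J" "k \<noteq> l"
    show "\<exists>x\<in>C. case_sum \<theta> \<eta> k x \<noteq> case_sum \<theta> \<eta> l x"
    proof (cases k; cases l)
      fix k' l' assume "k = Inr k'" "l = Inl l'"
      then show ?thesis
        using kl different_orders[of l' k'] by (auto simp: eq_commute)
    qed (use kl \<theta>_separated \<eta>_separated different_orders in auto)
  qed (use assms \<theta>_additive \<eta>_additive in \<open>auto simp: Plus_def\<close>)
  then show ?thesis
    using \<open>finite I\<close> \<open>finite J\<close> by (simp add: card_Plus)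
qed

section \<open>Linear and projective codes\<close>

lemma vecs_eq_PiE_dflt: "vecs n = PiE_dflt {..<n} 0 (\<lambda>_. UNIV)"
  by (auto simp: vecs_def PiE_dflt_def)

lemma finite_vecs: "finite (vecs n)"
  by (simp add: vecs_eq_PiE_dflt finite_PiE_dflt)

lemma linear_code_finite: "linear_code n C \<Longrightarrow> finite C"
  using finite_vecs unfolding linear_code_def by (auto intro: finite_subset)

lemma linear_code_uminus:
  assumes "linear_code n C" "x \<in> C"
  shows "- x \<in> C"
proof -
  have "- a = 3 * a" for a :: 4
    by (cases a rule: Z4_cases) simp_all
  then have "- x = (\<lambda>i. 3 * x i)"
    by (simp add: fun_eq_iff)
  then show ?thesis
    using assms unfolding linear_code_def by metis
qed

lemma linear_code_diff: "linear_code n C \<Longrightarrow> x \<in> C \<Longrightarrow> y \<in> C \<Longrightarrow> x - y \<in> C"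
  using linear_code_uminus[of n C y] unfolding linear_code_def by (metis diff_conv_add_uminus)

lemma sum_Re_omega_eq_0:
  assumes lc: "linear_code n C"
    and additive: "\<And>x y. x \<in> C \<Longrightarrow> y \<in> C \<Longrightarrow> \<theta> (x + y) = \<theta> x + \<theta> y"
    and "\<exists>c\<in>C. \<theta> c \<noteq> 0"
  shows "(\<Sum>x\<in>C. Re (omega (\<theta> x))) = 0"
proof -
  obtain c where "c \<in> C" "\<theta> c \<noteq> 0"
    using assms by blast
  then have "(\<Sum>x\<in>C. omega (\<theta> x)) = 0"
    using lc linear_code_finite linear_code_diff additive
    by (intro sum_omega_eq_0) (auto simp: linear_code_def)
  then show ?thesis
    by (metis Re_sum zero_complex.sel(1))
qed

lemma lee_wt_eq_0_iff: "x \<in> vecs n \<Longrightarrow> lee_wt n x = 0 \<longleftrightarrow> x = 0"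
  unfolding lee_wt_def vecs_def by (auto simp: fun_eq_iff) (meson lessThan_iff not_le)

lemma projective_exists_nonorthogonal:
  assumes "projective n C" "y \<in> vecs n" "y \<noteq> 0" "lee_wt n y \<le> 2"
  shows "\<exists>x\<in>C. (\<Sum>i<n. x i * y i) \<noteq> 0"
  using assms unfolding projective_def dual_code_def by force

lemma projective_exists_coord:
  assumes "projective n C" "i < n" "a \<noteq> 0"
  shows "\<exists>x\<in>C. x i * a \<noteq> 0"
proof -
  define y where "y = (\<lambda>k. if k = i then a else 0)"
  have "lee_wt n y = lee a"
    using \<open>i < n\<close> by (simp add: lee_wt_def y_def if_distrib[of lee] cong: if_cong)
  then have "\<exists>x\<in>C. (\<Sum>k<n. x k * y k) \<noteq> 0"
    using assms lee_le_2 by (intro projective_exists_nonorthogonal) (auto simp: y_def vecs_def fun_eq_iff)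
  then show ?thesis
    using \<open>i < n\<close> by (simp add: y_def if_distrib[of "\<lambda>c. _ * c"] cong: if_cong)
qed

lemma projective_exists_coord_pair:
  assumes "projective n C" "i < n" "j < n" "i \<noteq> j" "a \<noteq> 0" "lee a + lee b \<le> 2"
  shows "\<exists>x\<in>C. x i * a + x j * b \<noteq> 0"
proof -
  define y where "y = (\<lambda>k. if k = i then a else if k = j then b else 0)"
  have "lee_wt n y = (\<Sum>k<n. (if k = i then lee a else 0) + (if k = j then lee b else 0))"
    unfolding lee_wt_def y_def by (intro sum.cong) (use \<open>i \<noteq> j\<close> in auto)
  then have "lee_wt n y = lee a + lee b"
    using \<open>i < n\<close> \<open>j < n\<close> by (simp add: sum.distrib)
  then have "\<exists>x\<in>C. (\<Sum>k<n. x k * y k) \<noteq> 0"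
    using assms by (intro projective_exists_nonorthogonal) (auto simp: y_def vecs_def fun_eq_iff)
  moreover have "(\<Sum>k<n. x k * y k) = x i * a + x j * b" for x
  proof -
    have "(\<Sum>k<n. x k * y k) = (\<Sum>k<n. (if k = i then x i * a else 0) + (if k = j then x j * b else 0))"
      unfolding y_def by (intro sum.cong) (use \<open>i \<noteq> j\<close> in auto)
    then show ?thesis
      using \<open>i < n\<close> \<open>j < n\<close> by (simp add: sum.distrib)
  qed
  ultimately show ?thesis by simp
qed

section \<open>Moments of the Lee weight\<close>

context
  fixes n :: nat and C :: "(nat \<Rightarrow> 4) set"
  assumes lc: "linear_code n C" and pr: "projective n C"
begin

lemma sum_Re_omega_coord_eq_0:
  assumes "i < n" "a \<noteq> 0"
  shows "(\<Sum>x\<in>C. Re (omega (x i * a))) = 0"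
  using projective_exists_coord[OF pr assms]
  by (intro sum_Re_omega_eq_0[OF lc]) (auto simp: distrib_right)

lemma sum_Re_omega_coord_pair_eq_0:
  assumes "i < n" "j < n" "i \<noteq> j" "a \<noteq> 0" "lee a + lee b \<le> 2"
  shows "(\<Sum>x\<in>C. Re (omega (x i * a + x j * b))) = 0"
  using projective_exists_coord_pair[OF pr assms]
  by (intro sum_Re_omega_eq_0[OF lc]) (auto simp: algebra_simps)

lemma sum_lee_coord:
  assumes "i < n"
  shows "(\<Sum>x\<in>C. real (lee (x i))) = real (card C)"
  using sum_Re_omega_coord_eq_0[OF assms, of 1]
  by (simp add: lee_eq_1_minus_Re_omega sum_subtractf)

lemma sum_lee_coord_square:
  assumes "i < n"
  shows "(\<Sum>x\<in>C. real (lee (x i)) ^ 2) = 3 / 2 * real (card C)"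
  using sum_Re_omega_coord_eq_0[OF assms, of 1] sum_Re_omega_coord_eq_0[OF assms, of 2]
  by (simp add: lee_square sum.distrib sum_subtractf sum_distrib_left[symmetric]
      sum_divide_distrib[symmetric])

lemma sum_lee_coord_mult:
  assumes "i < n" "j < n" "i \<noteq> j"
  shows "(\<Sum>x\<in>C. real (lee (x i)) * real (lee (x j))) = real (card C)"
proof -
  have "(\<Sum>x\<in>C. Re (omega (x i + x j))) = 0" "(\<Sum>x\<in>C. Re (omega (x i - x j))) = 0"
    using sum_Re_omega_coord_pair_eq_0[OF assms, of 1 1] sum_Re_omega_coord_pair_eq_0[OF assms, of 1 "-1"]
    by (simp_all add: lee_def)
  then show ?thesis
    using sum_Re_omega_coord_eq_0[OF assms(1), of 1] sum_Re_omega_coord_eq_0[OF assms(2), of 1]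
    by (simp add: lee_mult sum.distrib sum_subtractf sum_divide_distrib[symmetric])
qed

lemma sum_lee_wt: "(\<Sum>x\<in>C. real (lee_wt n x)) = real n * real (card C)"
proof -
  have "(\<Sum>x\<in>C. real (lee_wt n x)) = (\<Sum>i<n. \<Sum>x\<in>C. real (lee (x i)))"
    by (simp add: lee_wt_def sum.swap[of _ C])
  then show ?thesis
    by (simp add: sum_lee_coord)
qed

lemma sum_lee_wt_square:
  "(\<Sum>x\<in>C. real (lee_wt n x) ^ 2) = (real n ^ 2 + real n / 2) * real (card C)"
proof -
  have "(\<Sum>x\<in>C. real (lee_wt n x) ^ 2) =
      (\<Sum>i<n. \<Sum>j<n. \<Sum>x\<in>C. real (lee (x i)) * real (lee (x j)))"
    by (simp add: lee_wt_def power2_eq_square sum_product sum.swap[of _ C])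
  also have "\<dots> = (\<Sum>i<n. \<Sum>j<n. real (card C) + (if i = j then real (card C) / 2 else 0))"
    by (intro sum.cong refl)
       (auto simp: sum_lee_coord_mult sum_lee_coord_square[simplified power2_eq_square])
  finally show ?thesis
    by (simp add: sum.distrib power2_eq_square algebra_simps)
qed

end

section \<open>A lower bound for the size of a projective code\<close>

lemma model_group_eq_PiE_dflt:
  "model_group k1 k2 = PiE_dflt {..<k1 + k2} 0 (\<lambda>i. if i < k1 then UNIV else {0, 2})"
  unfolding model_group_def PiE_dflt_def by (auto simp: not_less)

lemma card_model_group: "card (model_group k1 k2) = 2 ^ (2 * k1 + k2)"
proof -
  have "card (model_group k1 k2) = (\<Prod>i<k1 + k2. if i < k1 then 4 else 2)"
    by (simp add: model_group_eq_PiE_dflt card_PiE_dflt if_distrib[of card] eval_nat_numeral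
        cong: if_cong)
  also have "\<dots> = (\<Prod>i<k1. if i < k1 then 4 else 2) *
      (\<Prod>i\<in>{k1..<k1 + k2}. if i < k1 then 4 else 2)"
    unfolding lessThan_atLeast0 by (rule prod.atLeastLessThan_concat[symmetric]) simp_all
  also have "\<dots> = 4 ^ k1 * 2 ^ k2"
    by simp
  finally show ?thesis
    by (simp add: power_add power_mult)
qed

lemma model_group_add:
  "g \<in> model_group k1 k2 \<Longrightarrow> h \<in> model_group k1 k2 \<Longrightarrow> g + h \<in> model_group k1 k2"
  by (fastforce simp: model_group_def)

lemma has_type_card: "has_type C k1 k2 \<Longrightarrow> card C = 2 ^ (2 * k1 + k2)"
  unfolding has_type_def by (metis bij_betw_same_card card_model_group)

lemma has_type_inverse:
  assumes "has_type C k1 k2"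
  obtains \<psi> where "bij_betw \<psi> C (model_group k1 k2)"
    "\<And>x y. x \<in> C \<Longrightarrow> y \<in> C \<Longrightarrow> \<psi> (x + y) = \<psi> x + \<psi> y"
proof -
  obtain \<phi> where \<phi>: "bij_betw \<phi> (model_group k1 k2) C"
    and hom: "\<And>g h. g \<in> model_group k1 k2 \<Longrightarrow> h \<in> model_group k1 k2 \<Longrightarrow> \<phi> (g + h) = \<phi> g + \<phi> h"
    using assms unfolding has_type_def by blast
  define \<psi> where "\<psi> = inv_into (model_group k1 k2) \<phi>"
  have \<psi>: "bij_betw \<psi> C (model_group k1 k2)"
    unfolding \<psi>_def by (rule bij_betw_inv_into[OF \<phi>])
  have "\<psi> (x + y) = \<psi> x + \<psi> y" if "x \<in> C" "y \<in> C" for x y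
  proof -
    have sum_in: "\<psi> x + \<psi> y \<in> model_group k1 k2"
      using that model_group_add bij_betw_apply[OF \<psi>] by blast
    have "\<phi> (\<psi> x + \<psi> y) = x + y"
      using that \<phi> \<psi> hom by (simp add: \<psi>_def bij_betw_apply bij_betw_inv_into_right)
    then have "\<psi> (x + y) = \<psi> (\<phi> (\<psi> x + \<psi> y))"
      by simp
    also have "\<dots> = \<psi> x + \<psi> y"
      using bij_betw_inv_into_left[OF \<phi> sum_in] unfolding \<psi>_def .
    finally show ?thesis .
  qed
  with \<psi> show thesis by (rule that)
qed

(* The 2^(k1+k2) homomorphisms Z4^k1 \<times> Z2^k2 \<rightarrow> {0, 2}, one for each set S of coordinates. *)
definition order2_char :: "nat \<Rightarrow> nat set \<Rightarrow> (nat \<Rightarrow> 4) \<Rightarrow> 4" where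
  "order2_char k1 S g = (\<Sum>m\<in>S. if m < k1 then 2 * g m else g m)"

lemma order2_char_add: "order2_char k1 S (g + h) = order2_char k1 S g + order2_char k1 S h"
  unfolding order2_char_def by (simp add: sum.distrib[symmetric] distrib_left if_distrib cong: if_cong)

lemma order2_char_times_2:
  assumes "g \<in> model_group k1 k2"
  shows "2 * order2_char k1 S g = 0"
proof -
  have "4 * a = 0" for a :: 4
    by (cases a rule: Z4_cases) simp_all
  then have "2 * (if m < k1 then 2 * g m else g m) = 0" for m
    using assms by (cases "m < k1"; cases "m < k1 + k2") (auto simp: model_group_def not_less)
  then show ?thesis
    by (simp add: order2_char_def sum_distrib_left)
qed

lemma order2_char_separates:
  assumes "S \<subseteq> {..<k1 + k2}" "T \<subseteq> {..<k1 + k2}" "S \<noteq> T"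
  shows "\<exists>g\<in>model_group k1 k2. order2_char k1 S g \<noteq> order2_char k1 T g"
proof -
  obtain j where j: "j \<in> S \<longleftrightarrow> j \<notin> T" "j < k1 + k2"
    using assms by blast
  define g :: "nat \<Rightarrow> 4" where "g = (\<lambda>m. if m = j then (if j < k1 then 1 else 2) else 0)"
  have "order2_char k1 U g = (if j \<in> U then 2 else 0)" if "finite U" for U
  proof -
    have "order2_char k1 U g = (\<Sum>m\<in>U. if m = j then 2 else 0)"
      unfolding order2_char_def g_def by (intro sum.cong) auto
    then show ?thesis
      using that by simp
  qed
  moreover have "finite S" "finite T"
    using assms finite_subset by blast+
  moreover have "g \<in> model_group k1 k2"
    using j by (auto simp: g_def model_group_def)
  ultimately show ?thesis
    using j by (intro bexI[of _ g]) auto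
qed

lemma projective_unit_coords_separated:
  assumes "projective n C" "i < n" "j < n" "u \<in> {1, 3}" "v \<in> {1, 3}" "(i, u) \<noteq> (j, v)"
  shows "\<exists>x\<in>C. u * x i \<noteq> v * x j"
proof (cases "i = j")
  case True
  with assms(4-6) have "u - v = 2"
    by auto
  obtain x where "x \<in> C" "x i * 2 \<noteq> 0"
    using projective_exists_coord[OF assms(1,2), of 2] by auto
  moreover have "u * x i - v * x i = x i * (u - v)"
    by (simp add: algebra_simps)
  ultimately show ?thesis
    using True \<open>u - v = 2\<close> by (intro bexI[of _ x]) auto
next
  case False
  have "u \<noteq> 0" "lee u + lee (- v) \<le> 2"
    using assms(4,5) by (auto simp: lee_def)
  then obtain x where "x \<in> C" "x i * u + x j * (- v) \<noteq> 0"
    using projective_exists_coord_pair[OF assms(1-3) False] by blast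
  moreover have "x i * u + x j * (- v) = u * x i - v * x j"
    by (simp add: algebra_simps)
  ultimately show ?thesis
    by (intro bexI[of _ x]) (auto simp: mult.commute)
qed

lemma projective_unit_coord_order_4:
  assumes "projective n C" "i < n" "u \<in> {1, 3}"
  shows "\<exists>x\<in>C. 2 * (u * x i) \<noteq> 0"
proof -
  obtain x where "x \<in> C" "x i * 2 \<noteq> 0"
    using projective_exists_coord[OF assms(1,2), of 2] by auto
  moreover have "2 * (u * x i) = x i * 2"
    using \<open>u \<in> {1, 3}\<close> by (cases "x i" rule: Z4_cases) auto
  ultimately show ?thesis
    by (intro bexI[of _ x]) simp_all
qed

lemma projective_card_ge:
  assumes lc: "linear_code n C" and ty: "has_type C k1 k2" and pr: "projective n C"
  shows "2 * n + 2 ^ (k1 + k2) \<le> card C"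
proof -
  obtain \<psi> where \<psi>: "bij_betw \<psi> C (model_group k1 k2)"
    and \<psi>_add: "\<And>x y. x \<in> C \<Longrightarrow> y \<in> C \<Longrightarrow> \<psi> (x + y) = \<psi> x + \<psi> y"
    using has_type_inverse[OF ty] by blast
  define \<theta> :: "nat \<times> 4 \<Rightarrow> (nat \<Rightarrow> 4) \<Rightarrow> 4" where "\<theta> p x = snd p * x (fst p)" for p x
  define \<eta> where "\<eta> S x = order2_char k1 S (\<psi> x)" for S x
  have \<theta>_separated: "\<exists>x\<in>C. \<theta> p x \<noteq> \<theta> q x"
    if "p \<in> {..<n} \<times> {1, 3}" "q \<in> {..<n} \<times> {1, 3}" "p \<noteq> q" for p q
    using that projective_unit_coords_separated[OF pr, of "fst p" "fst q" "snd p" "snd q"]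
    by (simp add: \<theta>_def prod_eq_iff mem_Times_iff)
  have \<theta>_order_4: "\<exists>x\<in>C. 2 * \<theta> p x \<noteq> 0" if "p \<in> {..<n} \<times> {1, 3}" for p
    using that projective_unit_coord_order_4[OF pr, of "fst p" "snd p"]
    by (simp add: \<theta>_def mem_Times_iff)
  have \<eta>_separated: "\<exists>x\<in>C. \<eta> S x \<noteq> \<eta> T x"
    if ST: "S \<subseteq> {..<k1 + k2}" "T \<subseteq> {..<k1 + k2}" "S \<noteq> T" for S T
  proof -
    obtain g where "g \<in> model_group k1 k2" "order2_char k1 S g \<noteq> order2_char k1 T g"
      using order2_char_separates[OF ST] by blast
    moreover obtain x where "x \<in> C" "g = \<psi> x"
      using bij_betw_imp_surj_on[OF \<psi>] calculation(1) by blast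
    ultimately show ?thesis
      by (auto simp: \<eta>_def)
  qed
  have \<eta>_order_2: "2 * \<eta> S x = 0" if "x \<in> C" for S x
    using order2_char_times_2 bij_betw_apply[OF \<psi> that] by (simp add: \<eta>_def)
  have "card ({..<n} \<times> {1, 3 :: 4}) + card (Pow {..<k1 + k2}) \<le> card C"
    by (rule card_le_of_distinct_characters_of_orders_4_2[of C _ _ \<theta> \<eta>])
       (use lc \<theta>_separated \<theta>_order_4 \<eta>_separated \<eta>_order_2 \<psi>_add
        in \<open>auto simp: linear_code_finite linear_code_diff linear_code_def \<theta>_def \<eta>_def
          distrib_left order2_char_add\<close>)
  then show ?thesis
    by (simp add: card_cartesian_product card_Pow)
qed

section \<open>Two-weight codes\<close>

lemma zero_notin_nonzero_weights: "linear_code n C \<Longrightarrow> 0 \<notin> nonzero_weights n C"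
  using lee_wt_eq_0_iff by (auto simp: linear_code_def nonzero_weights_def)

lemma nonzero_weights_length_0: "linear_code 0 C \<Longrightarrow> nonzero_weights 0 C = {}"
  by (auto simp: linear_code_def vecs_def nonzero_weights_def fun_eq_iff)

lemma sum_lee_wt_distribution:
  fixes f :: "nat \<Rightarrow> 'a::comm_semiring_1"
  assumes "linear_code n C"
  shows "(\<Sum>x\<in>C. f (lee_wt n x)) =
    f 0 + (\<Sum>w\<in>nonzero_weights n C. of_nat (weight_count n C w) * f w)"
proof -
  have C: "finite C" "0 \<in> C" "C \<subseteq> vecs n"
    using assms linear_code_finite unfolding linear_code_def by auto
  then have zero: "{x \<in> C. lee_wt n x = 0} = {0}"
    using lee_wt_eq_0_iff by (auto simp: lee_wt_def)
  have weights: "lee_wt n ` C = insert 0 (nonzero_weights n C)"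
    using C lee_wt_eq_0_iff[of 0 n] by (force simp: nonzero_weights_def)
  have "finite (nonzero_weights n C)"
    using C weights by (metis finite_imageI finite_insert)
  moreover have "(\<Sum>x\<in>C. f (lee_wt n x)) =
      (\<Sum>w\<in>lee_wt n ` C. of_nat (weight_count n C w) * f w)"
    by (subst sum.image_gen[OF \<open>finite C\<close>, of _ "lee_wt n"]) (simp add: weight_count_def)
  ultimately show ?thesis
    using zero zero_notin_nonzero_weights[OF assms] by (simp add: weights weight_count_def)
qed

lemma two_weight_moments:
  assumes lc: "linear_code n C" and pr: "projective n C"
    and W: "nonzero_weights n C = {d, w}" "d \<noteq> w"
  defines "a \<equiv> real (weight_count n C d)" and "b \<equiv> real (weight_count n C w)"
  shows "real (card C) = 1 + a + b"
    and "a * real d + b * real w = real n * real (card C)"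
    and "a * real d ^ 2 + b * real w ^ 2 = (real n ^ 2 + real n / 2) * real (card C)"
  using sum_lee_wt_distribution[OF lc, of "\<lambda>_. 1 :: real"]
    sum_lee_wt_distribution[OF lc, of "\<lambda>w. real w"]
    sum_lee_wt_distribution[OF lc, of "\<lambda>w. real w ^ 2"]
    sum_lee_wt[OF lc pr] sum_lee_wt_square[OF lc pr] W
  by (simp_all add: a_def b_def)

lemma two_weight_moment_equations:
  fixes n w N a b :: real
  assumes "0 < n"
    and "N = 1 + a + b"
    and "a * n + b * w = n * N"
    and "a * n ^ 2 + b * w ^ 2 = (n ^ 2 + n / 2) * N"
  shows "b * (w - n) = n" and "2 * w = N"
proof -
  show first: "b * (w - n) = n"
    using assms(2,3) by (simp add: algebra_simps)
  have "b * (w - n) * (w + n) = n * N / 2 + n ^ 2"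
    using assms(2,4) by (simp add: algebra_simps power2_eq_square)
  then have "n * (w + n) = n * N / 2 + n ^ 2"
    using first by simp
  then have "n * w = n * (N / 2)"
    by (simp add: algebra_simps power2_eq_square)
  then show "2 * w = N"
    using \<open>0 < n\<close> by simp
qed

lemma two_weight_parameters:
  fixes n w b K :: nat
  assumes "0 < n" "n < w" "2 * w = 2 ^ K" "b * (w - n) = n"
  obtains t where "1 \<le> t" "t < K" "w = 2 ^ (K - 1)" "b = 2 ^ t - 1"
    "n = 2 ^ (K - 1) - 2 ^ (K - t - 1)" "2 * n + 2 ^ (K - t) = 2 ^ K"
proof -
  have "K \<noteq> 0"
    using assms(3) by (cases K) simp_all
  then have w: "w = 2 ^ (K - 1)"
    using assms(3) by (cases K) simp_all
  have "(b + 1) * (w - n) = w"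
    using assms(2,4) by (simp add: add_mult_distrib)
  then have "b + 1 dvd 2 ^ (K - 1)"
    using w by (metis dvd_triv_left)
  then obtain t where t: "t \<le> K - 1" "b + 1 = 2 ^ t"
    by (auto simp: divides_primepow_nat[OF two_is_prime_nat])
  have "b \<noteq> 0"
    using assms(1,4) by (metis mult_0 less_irrefl)
  with t have "1 \<le> t"
    by (cases t) simp_all
  have "t + (K - t - 1) = K - 1"
    using t(1) by simp
  then have "2 ^ t * (w - n) = 2 ^ t * 2 ^ (K - t - 1)"
    using \<open>(b + 1) * (w - n) = w\<close> t(2) w by (metis power_add)
  then have gap: "w - n = 2 ^ (K - t - 1)"
    by simp
  then have n: "n = 2 ^ (K - 1) - 2 ^ (K - t - 1)"
    using w \<open>n < w\<close> by simp
  have "2 * n + 2 * (w - n) = 2 * w"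
    using \<open>n < w\<close> by simp
  moreover have "2 * 2 ^ (K - t - 1) = (2 :: nat) ^ (K - t)"
    using t(1) \<open>1 \<le> t\<close> \<open>K \<noteq> 0\<close> by (simp flip: power_Suc)
  ultimately have "2 * n + 2 ^ (K - t) = 2 ^ K"
    using gap assms(3) by simp
  moreover have "t < K" "b = 2 ^ t - 1"
    using t \<open>K \<noteq> 0\<close> by simp_all
  ultimately show thesis
    using that \<open>1 \<le> t\<close> w n by blast
qed

lemma plotkin_optimal_lee_dist:
  assumes "plotkin_optimal n C" "n + 2 \<le> card C"
  shows "lee_dist n C = n"
proof -
  define N where "N = real (card C)"
  have "real n < N - 1"
    using assms(2) by (simp add: N_def)
  then have "N / (N - 1) * real n = real n + real n / (N - 1)"
    by (simp add: field_simps)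
  moreover have "0 \<le> real n / (N - 1)" "real n / (N - 1) < 1"
    using \<open>real n < N - 1\<close> by simp_all
  ultimately have "\<lfloor>N / (N - 1) * real n\<rfloor> = int n"
    by (intro floor_unique) simp_all
  then show ?thesis
    using assms(1) by (simp add: plotkin_optimal_def N_def)
qed

lemma lee_dist_eq_Min: "lee_dist n C = Min (nonzero_weights n C)"
  by (simp add: lee_dist_def nonzero_weights_def)

lemma card_2_obtain_Min:
  fixes A :: "'a::linorder set"
  assumes "card A = 2"
  obtains w where "A = {Min A, w}" "Min A < w"
proof -
  obtain a b where "A = {a, b}" "a < b"
    using assms by (metis card_2_iff insert_commute linorder_neqE)
  with that show thesis
    by simp
qed

lemma two_weight_code_parameters:
  assumes lc: "linear_code n C" and pr: "projective n C"
    and W: "nonzero_weights n C = {n, w}" "n < w"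
    and card: "card C = 2 ^ K"
  obtains t where "1 \<le> t" "t < K" "w = 2 ^ (K - 1)" "n = 2 ^ (K - 1) - 2 ^ (K - t - 1)"
    "2 * n + 2 ^ (K - t) = 2 ^ K"
    "weight_count n C n = 2 ^ K - 2 ^ t" "weight_count n C w = 2 ^ t - 1"
proof -
  have "0 < n"
    using zero_notin_nonzero_weights[OF lc] W(1) by auto
  define a b where "a = weight_count n C n" and "b = weight_count n C w"
  note moments = two_weight_moments[OF lc pr W(1) less_imp_neq[OF W(2)], folded a_def b_def]
  have "real (2 * w) = real (2 ^ K)" "real (b * (w - n)) = real n"
    using two_weight_moment_equations[OF _ moments] \<open>0 < n\<close> card W(2)
    by (simp_all add: of_nat_diff)
  then have "2 * w = 2 ^ K" "b * (w - n) = n"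
    by (simp_all only: of_nat_eq_iff)
  with two_weight_parameters[OF \<open>0 < n\<close> W(2)] obtain t where t: "1 \<le> t" "t < K"
    "w = 2 ^ (K - 1)" "b = 2 ^ t - 1" "n = 2 ^ (K - 1) - 2 ^ (K - t - 1)" "2 * n + 2 ^ (K - t) = 2 ^ K"
    by blast
  have "real (card C) = real (1 + a + b)"
    using moments(1) by simp
  then have "a = 2 ^ K - 2 ^ t"
    using card t(4) one_le_power[of "2 :: nat" t] by (simp only: of_nat_eq_iff) linarith
  with t that show thesis
    by (simp add: a_def b_def)
qed

theorem theorem4p6:
  fixes n k1 k2 :: nat and C :: "(nat \<Rightarrow> 4) set"
  assumes "linear_code n C"
    and "has_type C k1 k2"
    and "projective n C"
    and "plotkin_optimal n C"
    and "card (nonzero_weights n C) = 2"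
  shows "\<exists>t::nat. 1 \<le> t \<and> t \<le> k1 \<and>
           n = lee_dist n C \<and>
           lee_dist n C = 2 ^ (2 * k1 + k2 - 1) - 2 ^ (2 * k1 + k2 - t - 1) \<and>
           nonzero_weights n C = {2 ^ (2 * k1 + k2 - 1) - 2 ^ (2 * k1 + k2 - t - 1),
                                  2 ^ (2 * k1 + k2 - 1)} \<and>
           weight_count n C (2 ^ (2 * k1 + k2 - 1) - 2 ^ (2 * k1 + k2 - t - 1))
              = 2 ^ (2 * k1 + k2) - 2 ^ t \<and>
           weight_count n C (2 ^ (2 * k1 + k2 - 1)) = 2 ^ t - 1"
proof -
  define K where "K = 2 * k1 + k2"
  have card: "card C = 2 ^ K"
    using has_type_card[OF assms(2)] by (simp add: K_def)
  have bound: "2 * n + 2 ^ (k1 + k2) \<le> 2 ^ K"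
    using projective_card_ge[OF assms(1-3)] card by simp
  have "n \<noteq> 0"
    using nonzero_weights_length_0[of C] assms(1,5) by (cases n) auto
  then have dist: "lee_dist n C = n"
    using bound card one_le_power[of "2 :: nat" "k1 + k2"]
    by (intro plotkin_optimal_lee_dist[OF assms(4)]) linarith
  obtain w where "nonzero_weights n C = {Min (nonzero_weights n C), w}"
    "Min (nonzero_weights n C) < w"
    by (rule card_2_obtain_Min[OF assms(5)])
  then have W: "nonzero_weights n C = {n, w}" "n < w"
    unfolding dist[unfolded lee_dist_eq_Min] .
  obtain t where t: "1 \<le> t" "t < K" "w = 2 ^ (K - 1)" "n = 2 ^ (K - 1) - 2 ^ (K - t - 1)"
    "2 * n + 2 ^ (K - t) = 2 ^ K"
    "weight_count n C n = 2 ^ K - 2 ^ t" "weight_count n C w = 2 ^ t - 1"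
    by (rule two_weight_code_parameters[OF assms(1,3) W card])
  have "(2 :: nat) ^ (k1 + k2) \<le> 2 ^ (K - t)"
    using bound t(5) by linarith
  then have "t \<le> k1"
    using t(2) by (simp add: K_def power_increasing_iff)
  then show ?thesis
    using dist W t by (intro exI[of _ t]) (simp add: K_def)
qed

end
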